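(* Let $\hat H(w)=e^{-w}$ (discrete delay) and $\alpha,\beta\in\mathbb{R}$. If for some $\tilde\tau^*>0$ and $\omega>0$ the number $w=i\omega$ is a simple root of $\Phi(w)=0$ at $\tilde\tau=\tilde\tau^*$, then the root branch $w(\tilde\tau)$ through $i\omega$ satisfies $$\operatorname{Re}\left.\frac{dw}{d\tilde\tau}\right|_{\tilde\tau=\tilde\tau^*}=\frac{\omega^2}{\tilde\tau^*\big((1+\tilde\tau^* )^2+\omega^2\big)}>0.$$ In particular, every crossing of roots through the imaginary axis as $\tilde\tau$ increases is from left to right (so no stability switch back to stability can occur as $\tilde\tau$ increases).
   Context: For a delay-to-time-constant ratio $\tilde\tau>0$ and $\alpha,\beta\in\mathbb{R}$, the rescaled characteristic equation of the linearized coupled Wilson–Cowan system with kernel transform $\hat H$ is $$\Phi(w):=(w+\tilde\tau)^4-\alpha\,\tilde\tau^2(w+\tilde\tau)^2\hat H(w)^2+\beta\,\tilde\tau^4\hat H(w)^4=0.$$ For the Dirac (discrete) delay kernel $h(t)=\delta(t-\tau)$, $\hat H(w)=e^{-w}$. *)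

theory Defs
  imports "HOL-Analysis.Analysis"
begin

definition Hhat :: "complex \<Rightarrow> complex" where
  "Hhat w = exp (- w)"

definition Phi :: "real \<Rightarrow> real \<Rightarrow> real \<Rightarrow> complex \<Rightarrow> complex" where
  "Phi \<alpha> \<beta> \<tau> w =
     (w + of_real \<tau>) ^ 4
     - of_real \<alpha> * (of_real \<tau>) ^ 2 * (w + of_real \<tau>) ^ 2 * (Hhat w) ^ 2
     + of_real \<beta> * (of_real \<tau>) ^ 4 * (Hhat w) ^ 4"

end

theory Submission
  imports Defs
begin

text \<open>
  With \<open>a = w + \<tau>\<close> and \<open>u = \<tau> e\<^sup>-\<^sup>w\<close>, \<open>\<Phi>\<close> is a homogeneous quartic in \<open>(a, u)\<close>.
  Euler's relation for it turns into the identity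
  \<open>a (\<tau> (a + 1) \<partial>\<^sub>\<tau>\<Phi> + w \<partial>\<^sub>w\<Phi>) = 4 \<Phi> (\<tau> (a + 1) + w)\<close> between the partial derivatives.
  At a root with \<open>a \<noteq> 0\<close> and \<open>\<partial>\<^sub>w\<Phi> \<noteq> 0\<close>, combining it with the implicit-function relation
  \<open>\<partial>\<^sub>\<tau>\<Phi> + \<partial>\<^sub>w\<Phi> w' = 0\<close> gives the closed form \<open>w' = w / (\<tau> (w + \<tau> + 1))\<close>, whose real
  part at \<open>w = i\<omega>\<close> is \<open>\<omega>\<^sup>2 / (\<tau> ((1 + \<tau>)\<^sup>2 + \<omega>\<^sup>2))\<close>.
\<close>

definition Phi_deriv_w :: "real \<Rightarrow> real \<Rightarrow> real \<Rightarrow> complex \<Rightarrow> complex" where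
  "Phi_deriv_w \<alpha> \<beta> \<tau> w =
     4 * (w + of_real \<tau>) ^ 3
     - 2 * of_real \<alpha> * (of_real \<tau>) ^ 2 * (w + of_real \<tau>) * (1 - (w + of_real \<tau>)) * (Hhat w) ^ 2
     - 4 * of_real \<beta> * (of_real \<tau>) ^ 4 * (Hhat w) ^ 4"

definition Phi_deriv_tau :: "real \<Rightarrow> real \<Rightarrow> real \<Rightarrow> complex \<Rightarrow> complex" where
  "Phi_deriv_tau \<alpha> \<beta> \<tau> w =
     4 * (w + of_real \<tau>) ^ 3
     - 2 * of_real \<alpha> * of_real \<tau> * (w + of_real \<tau>) * (w + 2 * of_real \<tau>) * (Hhat w) ^ 2
     + 4 * of_real \<beta> * (of_real \<tau>) ^ 3 * (Hhat w) ^ 4"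

lemma has_vector_derivative_power [derivative_intros]:
  fixes f :: "real \<Rightarrow> 'a::real_normed_field"
  assumes "(f has_vector_derivative f') (at x)"
  shows "((\<lambda>t. f t ^ n) has_vector_derivative (of_nat n * f x ^ (n - 1) * f')) (at x)"
proof -
  have "((\<lambda>z. z ^ n) has_field_derivative (of_nat n * f x ^ (n - 1))) (at (f x))"
    by (auto intro!: derivative_eq_intros)
  from field_vector_diff_chain_at[OF assms this] show ?thesis
    by (simp add: o_def mult.commute)
qed

lemma has_vector_derivative_exp [derivative_intros]:
  fixes f :: "real \<Rightarrow> 'a::{real_normed_field, banach}"
  assumes "(f has_vector_derivative f') (at x)"
  shows "((\<lambda>t. exp (f t)) has_vector_derivative (exp (f x) * f')) (at x)"
proof -
  have "(exp has_field_derivative exp (f x)) (at (f x))"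
    by (rule DERIV_exp)
  from field_vector_diff_chain_at[OF assms this] show ?thesis
    by (simp add: o_def mult.commute)
qed

lemma Phi_has_field_derivative:
  "(Phi \<alpha> \<beta> \<tau> has_field_derivative Phi_deriv_w \<alpha> \<beta> \<tau> w) (at w)"
  unfolding Phi_def Phi_deriv_w_def Hhat_def
  by (rule derivative_eq_intros refl)+ (simp, algebra)

lemma Phi_along_path_has_vector_derivative:
  assumes "(w has_vector_derivative w') (at t)"
  shows "((\<lambda>s. Phi \<alpha> \<beta> s (w s)) has_vector_derivative
           Phi_deriv_tau \<alpha> \<beta> t (w t) + Phi_deriv_w \<alpha> \<beta> t (w t) * w') (at t)"
  unfolding Phi_def Phi_deriv_w_def Phi_deriv_tau_def Hhat_def
  by (rule derivative_eq_intros assms refl)+ (simp, algebra)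

lemma Phi_partials_identity:
  "(w + of_real \<tau>) * (of_real \<tau> * (w + of_real \<tau> + 1) * Phi_deriv_tau \<alpha> \<beta> \<tau> w
                        + w * Phi_deriv_w \<alpha> \<beta> \<tau> w)
   = 4 * Phi \<alpha> \<beta> \<tau> w * (of_real \<tau> * (w + of_real \<tau> + 1) + w)"
  unfolding Phi_def Phi_deriv_w_def Phi_deriv_tau_def by algebra

lemma Phi_root_branch_derivative:
  assumes "open S" and "\<tau> \<in> S"
    and roots: "\<And>s. s \<in> S \<Longrightarrow> Phi \<alpha> \<beta> s (w s) = 0"
    and w': "(w has_vector_derivative w') (at \<tau>)"
    and simple: "Phi_deriv_w \<alpha> \<beta> \<tau> (w \<tau>) \<noteq> 0"
    and "w \<tau> + of_real \<tau> \<noteq> 0"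
  shows "of_real \<tau> * (w \<tau> + of_real \<tau> + 1) * w' = w \<tau>"
proof -
  define c where "c = of_real \<tau> * (w \<tau> + of_real \<tau> + 1)"
  have "((\<lambda>s. Phi \<alpha> \<beta> s (w s)) has_vector_derivative 0) (at \<tau>)"
    by (rule has_vector_derivative_transform_within_open[OF _ \<open>open S\<close> \<open>\<tau> \<in> S\<close>])
      (simp_all add: roots)
  from vector_derivative_unique_at[OF Phi_along_path_has_vector_derivative[OF w'] this]
  have implicit: "Phi_deriv_tau \<alpha> \<beta> \<tau> (w \<tau>) = - Phi_deriv_w \<alpha> \<beta> \<tau> (w \<tau>) * w'"
    by (simp add: add_eq_0_iff)
  have "c * Phi_deriv_tau \<alpha> \<beta> \<tau> (w \<tau>) + w \<tau> * Phi_deriv_w \<alpha> \<beta> \<tau> (w \<tau>) = 0"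
    using Phi_partials_identity[of "w \<tau>" \<tau> \<alpha> \<beta>] roots[OF \<open>\<tau> \<in> S\<close>] \<open>w \<tau> + of_real \<tau> \<noteq> 0\<close>
    by (simp add: c_def)
  then have "Phi_deriv_w \<alpha> \<beta> \<tau> (w \<tau>) * (w \<tau> - c * w') = 0"
    by (simp add: implicit algebra_simps)
  with simple show ?thesis
    by (simp add: c_def)
qed

lemma Re_imaginary_crossing_speed:
  fixes \<tau> \<omega> :: real
  shows "Re (\<i> * of_real \<omega> / (of_real \<tau> * (\<i> * of_real \<omega> + of_real \<tau> + 1)))
         = \<omega>\<^sup>2 / (\<tau> * ((1 + \<tau>)\<^sup>2 + \<omega>\<^sup>2))"
proof -
  have "Re (\<i> * of_real \<omega> / (of_real \<tau> * (\<i> * of_real \<omega> + of_real \<tau> + 1)))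
        = (\<tau> * \<omega>\<^sup>2) / (\<tau> * (\<tau> * ((1 + \<tau>)\<^sup>2 + \<omega>\<^sup>2)))"
    by (simp add: Re_divide power2_eq_square algebra_simps)
  then show ?thesis
    by (cases "\<tau> = 0") simp_all
qed

theorem mainTheorem6:
  fixes \<alpha> \<beta> \<tau>s \<omega> :: real and w :: "real \<Rightarrow> complex" and w' :: complex and \<epsilon> :: real
  assumes "\<tau>s > 0" and "\<omega> > 0"
    and "Phi \<alpha> \<beta> \<tau>s (\<i> * of_real \<omega>) = 0"
    and "deriv (Phi \<alpha> \<beta> \<tau>s) (\<i> * of_real \<omega>) \<noteq> 0"
    and "\<epsilon> > 0"
    and "\<And>t. \<bar>t - \<tau>s\<bar> < \<epsilon> \<Longrightarrow> Phi \<alpha> \<beta> t (w t) = 0"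
    and "w \<tau>s = \<i> * of_real \<omega>"
    and "(w has_vector_derivative w') (at \<tau>s)"
  shows "Re w' = \<omega>\<^sup>2 / (\<tau>s * ((1 + \<tau>s)\<^sup>2 + \<omega>\<^sup>2))
         \<and> \<omega>\<^sup>2 / (\<tau>s * ((1 + \<tau>s)\<^sup>2 + \<omega>\<^sup>2)) > 0"
proof -
  let ?W = "\<i> * complex_of_real \<omega>"
  have simple: "Phi_deriv_w \<alpha> \<beta> \<tau>s ?W \<noteq> 0"
    using assms(4) by (simp add: DERIV_imp_deriv[OF Phi_has_field_derivative])
  have roots: "Phi \<alpha> \<beta> s (w s) = 0" if "s \<in> ball \<tau>s \<epsilon>" for s
    using assms(6) that by (simp add: dist_real_def abs_minus_commute)
  have "\<tau>s \<in> ball \<tau>s \<epsilon>"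
    using assms(5) by simp
  have "?W + of_real \<tau>s \<noteq> 0" and "of_real \<tau>s * (?W + of_real \<tau>s + 1) \<noteq> 0"
    using assms(1) by (auto simp: complex_eq_iff)
  moreover have "of_real \<tau>s * (?W + of_real \<tau>s + 1) * w' = ?W"
    using Phi_root_branch_derivative[OF open_ball \<open>\<tau>s \<in> ball \<tau>s \<epsilon>\<close> roots assms(8)]
      simple calculation(1) assms(7) by simp
  ultimately have "w' = ?W / (of_real \<tau>s * (?W + of_real \<tau>s + 1))"
    by (simp add: eq_divide_eq mult.commute)
  then have "Re w' = \<omega>\<^sup>2 / (\<tau>s * ((1 + \<tau>s)\<^sup>2 + \<omega>\<^sup>2))"
    by (simp only: Re_imaginary_crossing_speed)
  moreover have "\<omega>\<^sup>2 / (\<tau>s * ((1 + \<tau>s)\<^sup>2 + \<omega>\<^sup>2)) > 0"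
    using assms(1,2) by (simp add: add_pos_nonneg)
  ultimately show ?thesis by simp
qed

end
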